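(* Assume there exist $\nu>0$ and constants $0<C_1\le C_2$, independent of $m$ and $u$, such that $C_1|m|^{-2\nu}\le|g_m(u)|^2\le C_2|m|^{-2\nu}$ for all $m$ and $u\in[0,1]$. Then the estimator $\widetilde\beta_{j,k,j',k'}$ satisfies $$\mathrm{Var}\big(\widetilde\beta_{j,k,j',k'}\big)\asymp\varepsilon^2\,2^{2j\nu}.$$
   Context: Model: for $\varepsilon>0$ one observes $y(u,t)=\int_0^1 g(u,t-x)f(u,x)\,dx+\varepsilon z(u,t)$, $u,t\in[0,1]$, where $f,g$ are periodic (period 1) in the second argument, $g$ is known, and $z$ is a two-dimensional Gaussian white noise. Let $e_m(t)=e^{i2\pi mt}$ and for a function $w(u,t)$ set $w_m(u)=\int_0^1 w(u,t)\overline{e_m(t)}\,dt$ (applied to $y$ and $g$). Let $\{\psi_{j,k}\}$ be a periodized band-limited (Meyer-type) wavelet basis of $L^2[0,1]$, $\psi_{j,k,m}=\langle e_m,\psi_{j,k}\rangle$, $W_j=\{m:\psi_{j,k,m}\ne0\}$, and let $\{\eta_{j',k'}\}$ be a periodized compactly supported (Daubechies-type) wavelet basis of $L^2[0,1]$. Define $$\widetilde\beta_{j,k,j',k'}=\sum_{m\in W_j}\overline{\psi_{j,k,m}}\int_0^1\frac{y_m(u)}{g_m(u)}\eta_{j',k'}(u)\,du.$$ The notation $a\asymp b$ means $a/b$ is bounded above and below by positive constants independent of $\varepsilon$. *)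

theory Defs
  imports "HOL-Probability.Probability"
begin

definition S01 :: "(real \<times> real) set" where
  "S01 = {0..1} \<times> {0..1}"

definition expo :: "int \<Rightarrow> real \<Rightarrow> complex" where
  "expo m t = cis (2 * pi * real_of_int m * t)"

definition fcoef :: "(real \<Rightarrow> complex) \<Rightarrow> int \<Rightarrow> complex" where
  "fcoef w m = (LINT t:{0..1}|lborel. w t * cnj (expo m t))"

definition gcoef :: "(real \<Rightarrow> real \<Rightarrow> real) \<Rightarrow> int \<Rightarrow> real \<Rightarrow> complex" where
  "gcoef g m u = fcoef (\<lambda>t. complex_of_real (g u t)) m"

definition psi_coef :: "(nat \<Rightarrow> nat \<Rightarrow> real \<Rightarrow> real) \<Rightarrow> nat \<Rightarrow> nat \<Rightarrow> int \<Rightarrow> complex" where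
  "psi_coef \<psi> j k m = (LINT t:{0..1}|lborel. expo m t * cnj (complex_of_real (\<psi> j k t)))"

definition Wset :: "(nat \<Rightarrow> nat \<Rightarrow> real \<Rightarrow> real) \<Rightarrow> nat \<Rightarrow> int set" where
  "Wset \<psi> j = {m. \<exists>k<2^j. psi_coef \<psi> j k m \<noteq> 0}"

definition periodic2 :: "(real \<Rightarrow> real \<Rightarrow> real) \<Rightarrow> bool" where
  "periodic2 w \<longleftrightarrow> (\<forall>u t. w u (t + 1) = w u t)"

definition orthonormal01 :: "(nat \<Rightarrow> nat \<Rightarrow> real \<Rightarrow> real) \<Rightarrow> bool" where
  "orthonormal01 \<psi> \<longleftrightarrow>
     (\<forall>j k. k < 2^j \<longrightarrow> \<psi> j k \<in> borel_measurable borel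
                         \<and> set_integrable lborel {0..1} (\<lambda>t. (\<psi> j k t)^2)) \<and>
     (\<forall>j k j2 k2. k < 2^j \<longrightarrow> k2 < 2^j2 \<longrightarrow>
        (LINT t:{0..1}|lborel. \<psi> j k t * \<psi> j2 k2 t) = (if j = j2 \<and> k = k2 then 1 else 0))"

text \<open>Periodized band-limited (Meyer-type) wavelets: orthonormal, and each psi_{j,k}
  is band-limited, i.e. a trigonometric polynomial whose frequencies lie in the
  Meyer band 2^j/3 \<le> |m| \<le> 2^(j+2)/3 (the image of 2pi/3 \<le> |omega| \<le> 8pi/3).\<close>
definition meyer_type :: "(nat \<Rightarrow> nat \<Rightarrow> real \<Rightarrow> real) \<Rightarrow> bool" where
  "meyer_type \<psi> \<longleftrightarrow> orthonormal01 \<psi> \<and>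
     (\<forall>j k. k < 2^j \<longrightarrow> (\<exists>c :: int \<Rightarrow> complex. \<forall>t.
        complex_of_real (\<psi> j k t) =
          (\<Sum>m\<in>{m::int. 2^j / 3 \<le> \<bar>real_of_int m\<bar> \<and> \<bar>real_of_int m\<bar> \<le> 2^(j+2) / 3}. c m * expo m t)))"

definition daubechies_type :: "(nat \<Rightarrow> nat \<Rightarrow> real \<Rightarrow> real) \<Rightarrow> bool" where
  "daubechies_type \<eta> \<longleftrightarrow> orthonormal01 \<eta> \<and>
     (\<exists>\<eta>0 :: real \<Rightarrow> real. \<eta>0 \<in> borel_measurable borel \<and> bounded (range \<eta>0)
        \<and> bounded {x. \<eta>0 x \<noteq> 0} \<and>
        (\<forall>j k u. \<eta> j k u = 2 powr (real j / 2) *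
                  (\<Sum>\<^sub>\<infinity>l::int. \<eta>0 (2^j * (u + real_of_int l) - real k))))"

text \<open>Two-dimensional Gaussian white noise on [0,1]^2, as an isonormal Gaussian process
  Z indexed by real L^2([0,1]^2): Z h = int int h dz.\<close>
definition white_noise :: "'w measure \<Rightarrow> (((real \<times> real) \<Rightarrow> real) \<Rightarrow> 'w \<Rightarrow> real) \<Rightarrow> bool" where
  "white_noise M Z \<longleftrightarrow> prob_space M \<and>
     (\<forall>h. h \<in> borel_measurable borel \<longrightarrow> set_integrable lborel S01 (\<lambda>p. (h p)^2) \<longrightarrow>
        Z h \<in> borel_measurable M \<and> integrable M (\<lambda>\<omega>. (Z h \<omega>)^2) \<and>
        (LINT \<omega>|M. Z h \<omega>) = 0 \<and>
        ((LINT p:S01|lborel. (h p)^2) > 0 \<longrightarrow>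
           distributed M lborel (Z h)
             (\<lambda>x. ennreal (normal_density 0 (sqrt (LINT p:S01|lborel. (h p)^2)) x)))) \<and>
     (\<forall>h h'. h \<in> borel_measurable borel \<longrightarrow> set_integrable lborel S01 (\<lambda>p. (h p)^2) \<longrightarrow>
        h' \<in> borel_measurable borel \<longrightarrow> set_integrable lborel S01 (\<lambda>p. (h' p)^2) \<longrightarrow>
        (LINT \<omega>|M. Z h \<omega> * Z h' \<omega>) = (LINT p:S01|lborel. h p * h' p) \<and>
        (\<forall>a b. AE \<omega> in M. Z (\<lambda>p. a * h p + b * h' p) \<omega> = a * Z h \<omega> + b * Z h' \<omega>))"

definition wn_int :: "(((real \<times> real) \<Rightarrow> real) \<Rightarrow> 'w \<Rightarrow> real) \<Rightarrow> ((real \<times> real) \<Rightarrow> complex) \<Rightarrow> 'w \<Rightarrow> complex" where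
  "wn_int Z h \<omega> = complex_of_real (Z (\<lambda>p. Re (h p)) \<omega>) + \<i> * complex_of_real (Z (\<lambda>p. Im (h p)) \<omega>)"

definition conv_signal :: "(real \<Rightarrow> real \<Rightarrow> real) \<Rightarrow> (real \<Rightarrow> real \<Rightarrow> real) \<Rightarrow> real \<Rightarrow> real \<Rightarrow> real" where
  "conv_signal g f u t = (LINT x:{0..1}|lborel. g u (t - x) * f u x)"

text \<open>int int h(u,t) dy(u,t) for the observation y = g*f + eps z.\<close>
definition obs_int :: "(real \<Rightarrow> real \<Rightarrow> real) \<Rightarrow> (real \<Rightarrow> real \<Rightarrow> real) \<Rightarrow> real \<Rightarrow>
    (((real \<times> real) \<Rightarrow> real) \<Rightarrow> 'w \<Rightarrow> real) \<Rightarrow> ((real \<times> real) \<Rightarrow> complex) \<Rightarrow> 'w \<Rightarrow> complex" where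
  "obs_int g f \<epsilon> Z h \<omega> =
     (LINT p:S01|lborel. complex_of_real (conv_signal g f (fst p) (snd p)) * h p)
     + complex_of_real \<epsilon> * wn_int Z h \<omega>"

text \<open>The estimator: sum_{m in W_j} conj(psi_{jkm}) int y_m(u) eta_{j'k'}(u) / g_m(u) du,
  where int y_m(u) phi(u) du = int int y(u,t) conj(e_m(t)) phi(u) du dt.\<close>
definition beta_tilde :: "(nat \<Rightarrow> nat \<Rightarrow> real \<Rightarrow> real) \<Rightarrow> (nat \<Rightarrow> nat \<Rightarrow> real \<Rightarrow> real) \<Rightarrow>
    (real \<Rightarrow> real \<Rightarrow> real) \<Rightarrow> (real \<Rightarrow> real \<Rightarrow> real) \<Rightarrow> real \<Rightarrow>
    (((real \<times> real) \<Rightarrow> real) \<Rightarrow> 'w \<Rightarrow> real) \<Rightarrow> nat \<Rightarrow> nat \<Rightarrow> nat \<Rightarrow> nat \<Rightarrow> 'w \<Rightarrow> complex" where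
  "beta_tilde \<psi> \<eta> g f \<epsilon> Z j k j' k' \<omega> =
     (\<Sum>m\<in>Wset \<psi> j. cnj (psi_coef \<psi> j k m) *
        obs_int g f \<epsilon> Z
          (\<lambda>p. cnj (expo m (snd p)) * complex_of_real (\<eta> j' k' (fst p)) / gcoef g m (fst p)) \<omega>)"

definition cvariance :: "'w measure \<Rightarrow> ('w \<Rightarrow> complex) \<Rightarrow> real" where
  "cvariance M X = (LINT \<omega>|M. (cmod (X \<omega> - (LINT \<omega>'|M. X \<omega>')))^2)"

end

theory Submission
  imports Defs
begin

text \<open>
  Up to a constant, the estimator is \<epsilon> times the white-noise integral of
  H(u,t) = \<eta>(u) \<Sum>_m conj(\<psi>_jkm) conj(e_m(t)) / g_m(u), so its variance is \<epsilon>^2 \<parallel>H\<parallel>^2.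
  Parseval in t gives \<parallel>H\<parallel>^2 = \<integral> \<eta>(u)^2 \<Sum>_m |\<psi>_jkm|^2 / |g_m(u)|^2 du. As \<psi>_jk and \<eta>
  have norm 1, this is an average of the values 1/|g_m(u)|^2 over m \<in> W_j, and since W_j lies in the
  Meyer band 2^j/3 \<le> |m| \<le> 2^(j+2)/3, the hypothesis on g makes each of them comparable to
  |m|^(2\<nu>), hence to 2^(2j\<nu>).
\<close>

lemma expo_has_integral: "(expo d has_integral (if d = 0 then 1 else 0)) {0..1}"
proof (cases "d = 0")
  case True
  then show ?thesis
    unfolding expo_def using has_integral_const_real[of "1::complex" 0 1] by simp
next
  case False
  define c where "c = \<i> * complex_of_real (2 * pi * real_of_int d)"
  have c: "c \<noteq> 0" using False by (simp add: c_def)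
  have expo_c: "expo d t = exp (t *\<^sub>R c)" for t
    unfolding expo_def cis_conv_exp c_def by (simp add: scaleR_conv_of_real mult_ac)
  have "((\<lambda>t. exp (t *\<^sub>R c) * c) has_integral (exp (1 *\<^sub>R c) - exp (0 *\<^sub>R c))) {0..1}"
    by (rule fundamental_theorem_of_calculus) (auto intro: exp_scaleR_has_vector_derivative_right)
  moreover have "exp (1 *\<^sub>R c) = 1"
    using expo_c[of 1] unfolding expo_def by (simp add: cis_multiple_2pi)
  ultimately have "((\<lambda>t. exp (t *\<^sub>R c) * c * inverse c) has_integral 0) {0..1}"
    using has_integral_mult_left[of _ 0 _ "inverse c"] by simp
  moreover have "(\<lambda>t. exp (t *\<^sub>R c) * c * inverse c) = expo d"
    using c by (simp add: expo_c fun_eq_iff)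
  ultimately show ?thesis using False by simp
qed

lemma continuous_on_expo [continuous_intros]: "continuous_on S (expo m)"
  unfolding expo_def by (intro continuous_intros)

lemma borel_measurable_cnj_expo [measurable]: "(\<lambda>t. cnj (expo m t)) \<in> borel_measurable borel"
  by (intro borel_measurable_continuous_onI continuous_intros)

lemma norm_expo [simp]: "cmod (expo m t) = 1"
  unfolding expo_def by simp

lemma expo_mult_cnj: "expo m t * cnj (expo n t) = expo (m - n) t"
  unfolding expo_def by (simp add: cis_cnj cis_mult algebra_simps)

lemma integral_expo_mult_cnj:
  "integral {0..1} (\<lambda>t. expo m t * cnj (expo n t)) = (if m = n then 1 else 0)"
  unfolding expo_mult_cnj using expo_has_integral[of "m - n"] integral_unique by auto

lemma set_integral_Icc_eq_integral_continuous:
  assumes "continuous_on {0..1::real} (f :: real \<Rightarrow> complex)"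
  shows "(LINT t:{0..1}|lborel. f t) = integral {0..1} f"
  by (rule set_borel_integral_eq_integral(2))
     (use borel_integrable_compact[OF compact_Icc assms] in \<open>simp add: set_integrable_def\<close>)

lemma integral_expo_mult_cnj_trig_poly:
  assumes "finite B"
  shows "integral {0..1} (\<lambda>t. expo m t * cnj (\<Sum>n\<in>B. c n * expo n t))
       = (if m \<in> B then cnj (c m) else 0)"
proof -
  have "integral {0..1} (\<lambda>t. expo m t * cnj (\<Sum>n\<in>B. c n * expo n t))
      = (\<Sum>n\<in>B. integral {0..1} (\<lambda>t. cnj (c n) * (expo m t * cnj (expo n t))))"
    unfolding cnj_sum sum_distrib_left
    by (subst integral_sum[OF assms])
       (auto intro!: integrable_continuous_interval continuous_intros sum.cong simp: mult_ac)
  also have "\<dots> = (\<Sum>n\<in>B. cnj (c n) * (if m = n then 1 else 0))"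
    by (simp only: integral_mult_right integral_expo_mult_cnj)
  also have "\<dots> = (if m \<in> B then cnj (c m) else 0)"
    using assms by (simp add: if_distrib sum.delta cong: if_cong)
  finally show ?thesis .
qed

lemma parseval_trig_poly:
  assumes "finite B"
  shows "(LINT t:{0..1}|lborel. (cmod (\<Sum>m\<in>B. d m * expo m t))^2) = (\<Sum>m\<in>B. (cmod (d m))^2)"
proof -
  let ?S = "\<lambda>t. \<Sum>m\<in>B. d m * expo m t"
  have "complex_of_real (LINT t:{0..1}|lborel. (cmod (?S t))^2)
      = (LINT t:{0..1}|lborel. ?S t * cnj (?S t))"
    by (simp only: set_integral_complex_of_real[symmetric] complex_norm_square)
  also have "\<dots> = integral {0..1} (\<lambda>t. \<Sum>m\<in>B. d m * (expo m t * cnj (?S t)))"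
    by (subst set_integral_Icc_eq_integral_continuous)
       (auto intro!: continuous_intros simp: sum_distrib_right mult_ac)
  also have "\<dots> = (\<Sum>m\<in>B. d m * integral {0..1} (\<lambda>t. expo m t * cnj (?S t)))"
    by (subst integral_sum[OF assms])
       (auto intro!: integrable_continuous_interval continuous_intros simp: integral_mult_right)
  also have "\<dots> = complex_of_real (\<Sum>m\<in>B. (cmod (d m))^2)"
    by (simp only: integral_expo_mult_cnj_trig_poly[OF assms])
       (simp add: complex_norm_square[symmetric] del: of_real_power)
  finally show ?thesis by (simp only: of_real_eq_iff)
qed

definition meyer_band :: "nat \<Rightarrow> int set" where
  "meyer_band j = {m. 2^j / 3 \<le> \<bar>real_of_int m\<bar> \<and> \<bar>real_of_int m\<bar> \<le> 2^(j+2) / 3}"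

lemma finite_meyer_band: "finite (meyer_band j)"
proof (rule finite_subset)
  show "meyer_band j \<subseteq> {- \<lceil>2^(j+2)/3::real\<rceil> .. \<lceil>2^(j+2)/3::real\<rceil>}"
    unfolding meyer_band_def by (auto simp: abs_le_iff ceiling_le_iff le_ceiling_iff) linarith+
qed simp

lemma zero_notin_meyer_band: "0 \<notin> meyer_band j"
  unfolding meyer_band_def by (simp add: not_le)

lemma psi_coef_trig_poly:
  assumes "finite B" and "\<And>t. complex_of_real (\<psi> j k t) = (\<Sum>n\<in>B. c n * expo n t)"
  shows "psi_coef \<psi> j k m = (if m \<in> B then cnj (c m) else 0)"
proof -
  have "psi_coef \<psi> j k m = integral {0..1} (\<lambda>t. expo m t * cnj (\<Sum>n\<in>B. c n * expo n t))"
    unfolding psi_coef_def assms(2)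
    by (rule set_integral_Icc_eq_integral_continuous) (intro continuous_intros)
  then show ?thesis using integral_expo_mult_cnj_trig_poly[OF assms(1)] by simp
qed

lemma meyer_type_psi_coef_eq:
  assumes "meyer_type \<psi>" and "k < 2^j"
  obtains c where "\<And>m. psi_coef \<psi> j k m = (if m \<in> meyer_band j then cnj (c m) else 0)"
    and "(\<Sum>m\<in>meyer_band j. (cmod (c m))^2) = 1"
proof -
  obtain c where c: "\<And>t. complex_of_real (\<psi> j k t) = (\<Sum>m\<in>meyer_band j. c m * expo m t)"
    using assms unfolding meyer_type_def meyer_band_def by blast
  have "(\<Sum>m\<in>meyer_band j. (cmod (c m))^2) = (LINT t:{0..1}|lborel. (cmod (complex_of_real (\<psi> j k t)))^2)"
    unfolding c by (rule parseval_trig_poly[OF finite_meyer_band, symmetric])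
  also have "\<dots> = 1"
    using assms unfolding meyer_type_def orthonormal01_def by (simp add: power2_eq_square)
  finally show ?thesis
    using that psi_coef_trig_poly[where B = "meyer_band j" and \<psi> = \<psi> and j = j and k = k,
                                  OF finite_meyer_band c]
    by blast
qed

lemma Wset_subset_meyer_band: "meyer_type \<psi> \<Longrightarrow> Wset \<psi> j \<subseteq> meyer_band j"
  unfolding Wset_def by (force elim: meyer_type_psi_coef_eq split: if_splits)

lemma finite_Wset: "meyer_type \<psi> \<Longrightarrow> finite (Wset \<psi> j)"
  using Wset_subset_meyer_band finite_meyer_band by (rule finite_subset)

lemma sum_norm_psi_coef_sq:
  assumes psi: "meyer_type \<psi>" and k: "k < 2^j"
  shows "(\<Sum>m\<in>Wset \<psi> j. (cmod (psi_coef \<psi> j k m))^2) = 1"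
proof -
  obtain c where c: "\<And>m. psi_coef \<psi> j k m = (if m \<in> meyer_band j then cnj (c m) else 0)"
    and c1: "(\<Sum>m\<in>meyer_band j. (cmod (c m))^2) = 1"
    using meyer_type_psi_coef_eq[OF assms] by blast
  have "(\<Sum>m\<in>Wset \<psi> j. (cmod (psi_coef \<psi> j k m))^2) = (\<Sum>m\<in>meyer_band j. (cmod (psi_coef \<psi> j k m))^2)"
    using k by (intro sum.mono_neutral_left finite_meyer_band Wset_subset_meyer_band psi)
               (auto simp: Wset_def)
  also have "\<dots> = 1" using c1 by (simp add: c)
  finally show ?thesis .
qed

lemma borel_measurable_gcoef:
  assumes "(\<lambda>p. g (fst p) (snd p)) \<in> borel_measurable borel"
  shows "gcoef g m \<in> borel_measurable borel"
proof -
  have [measurable]: "(\<lambda>p. g (fst p) (snd p)) \<in> borel_measurable (borel \<Otimes>\<^sub>M borel)"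
    using assms by (simp only: borel_prod)
  have "(\<lambda>(u, t). indicator {0..1::real} t *\<^sub>R (complex_of_real (g u t) * cnj (expo m t)))
      \<in> borel_measurable (borel \<Otimes>\<^sub>M lborel)"
    by (subst measurable_cong_sets[OF sets_pair_measure_cong[OF refl sets_lborel] refl]) measurable
  then show ?thesis
    unfolding gcoef_def fcoef_def set_lebesgue_integral_def
    by (rule lborel.borel_measurable_lebesgue_integral)
qed

lemma S01_sets_borel [measurable]: "S01 \<in> sets borel"
  unfolding S01_def by (intro borel_closed closed_Times) auto

lemma indicator_S01: "indicator S01 p = indicator {0..1} (fst p) * (indicator {0..1} (snd p) :: real)"
  unfolding S01_def by (auto split: split_indicator simp: mem_Times_iff)

lemma set_integrable_S01_dominated:
  fixes f :: "real \<times> real \<Rightarrow> 'b::{banach, second_countable_topology}"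
  assumes d: "d \<in> borel_measurable borel" "set_integrable lborel {0..1} d"
    and f: "f \<in> borel_measurable borel"
    and bound: "\<And>p. p \<in> S01 \<Longrightarrow> norm (f p) \<le> d (fst p)"
  shows "set_integrable lborel S01 f"
proof -
  have "integrable (lborel \<Otimes>\<^sub>M lborel) (\<lambda>p. indicator S01 p * d (fst p))"
  proof (rule pair_sigma_finite.Fubini_integrable)
    show "pair_sigma_finite lborel lborel"
      by (simp add: pair_sigma_finite_def lborel.sigma_finite_measure_axioms)
    show "(\<lambda>p. indicator S01 p * d (fst p)) \<in> borel_measurable (lborel \<Otimes>\<^sub>M lborel)"
      by (subst measurable_cong_sets[OF sets_pair_measure_cong[OF sets_lborel sets_lborel] refl])
         (use d in \<open>unfold indicator_S01, measurable\<close>)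
    show "integrable lborel (\<lambda>u. \<integral>t. norm (indicator S01 (u, t) * d (fst (u, t))) \<partial>lborel)"
      using integrable_abs[OF d(2)[unfolded set_integrable_def]] by (simp add: indicator_S01 abs_mult)
  qed (simp add: indicator_S01)
  then have dom: "integrable lborel (\<lambda>p. indicator S01 p * d (fst p))"
    by (simp add: lborel_prod)
  show ?thesis
    unfolding set_integrable_def
    by (rule Bochner_Integration.integrable_bound[OF dom])
       (use f bound in \<open>auto split: split_indicator intro!: AE_I2 order_trans[OF _ abs_ge_self]\<close>)
qed

lemma set_integral_S01_iterated:
  fixes f :: "real \<times> real \<Rightarrow> real"
  assumes "set_integrable lborel S01 f"
  shows "(LINT p:S01|lborel. f p) = (LINT u:{0..1}|lborel. (LINT t:{0..1}|lborel. f (u, t)))"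
proof -
  have PS: "pair_sigma_finite lborel lborel"
    by (simp add: pair_sigma_finite_def lborel.sigma_finite_measure_axioms)
  have "integrable (lborel \<Otimes>\<^sub>M lborel) (\<lambda>p. indicator S01 p *\<^sub>R f p)"
    using assms by (simp add: set_integrable_def lborel_prod)
  then have "(\<integral>u. (\<integral>t. indicator S01 (u, t) *\<^sub>R f (u, t) \<partial>lborel) \<partial>lborel)
      = integral\<^sup>L (lborel \<Otimes>\<^sub>M lborel) (\<lambda>p. indicator S01 p *\<^sub>R f p)"
    by (rule pair_sigma_finite.integral_fst'[OF PS])
  then show ?thesis
    unfolding set_lebesgue_integral_def indicator_S01 lborel_prod by (simp add: mult.assoc)
qed

definition L2_S01 :: "(real \<times> real \<Rightarrow> real) \<Rightarrow> bool" where
  "L2_S01 h \<longleftrightarrow> h \<in> borel_measurable borel \<and> set_integrable lborel S01 (\<lambda>p. (h p)^2)"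

lemma L2_S01_zero: "L2_S01 (\<lambda>p. 0)"
  unfolding L2_S01_def set_integrable_def by simp

lemma L2_S01_lin:
  assumes "L2_S01 f" "L2_S01 g"
  shows "L2_S01 (\<lambda>p. a * f p + b * g p)"
proof -
  have [measurable]: "f \<in> borel_measurable borel" "g \<in> borel_measurable borel"
    using assms unfolding L2_S01_def by auto
  have dom: "set_integrable lborel S01 (\<lambda>p. 2 * a^2 * (f p)^2 + 2 * b^2 * (g p)^2)"
    using assms unfolding L2_S01_def by (intro set_integral_add set_integrable_mult_right) auto
  have "(a * f p + b * g p)^2 \<le> 2 * a^2 * (f p)^2 + 2 * b^2 * (g p)^2" for p
    using sum_squares_bound[of "a * f p" "b * g p"] by (simp add: power2_eq_square algebra_simps)
  then have "set_integrable lborel S01 (\<lambda>p. (a * f p + b * g p)^2)"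
    unfolding set_integrable_def
    by (intro Bochner_Integration.integrable_bound[OF dom[unfolded set_integrable_def]])
       (auto split: split_indicator intro!: AE_I2 order_trans[OF _ abs_ge_self])
  then show ?thesis unfolding L2_S01_def by simp
qed

lemma L2_S01_sum: "finite F \<Longrightarrow> (\<And>n. n \<in> F \<Longrightarrow> L2_S01 (\<phi> n)) \<Longrightarrow> L2_S01 (\<lambda>p. \<Sum>n\<in>F. \<phi> n p)"
proof (induction F rule: finite_induct)
  case (insert x F)
  then show ?case using L2_S01_lin[of "\<phi> x" "\<lambda>p. \<Sum>n\<in>F. \<phi> n p" 1 1] by simp
qed (simp add: L2_S01_zero)

lemma white_noise_moments:
  assumes wn: "white_noise M Z" and h: "L2_S01 h"
  shows "Z h \<in> borel_measurable M" "integrable M (Z h)" "integrable M (\<lambda>\<omega>. (Z h \<omega>)^2)"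
    "(LINT \<omega>|M. Z h \<omega>) = 0" "(LINT \<omega>|M. (Z h \<omega>)^2) = (LINT p:S01|lborel. (h p)^2)"
proof -
  have "prob_space M" using wn unfolding white_noise_def by auto
  then interpret prob_space M .
  show "Z h \<in> borel_measurable M" "integrable M (\<lambda>\<omega>. (Z h \<omega>)^2)" "(LINT \<omega>|M. Z h \<omega>) = 0"
    using wn h unfolding white_noise_def L2_S01_def by auto
  then show "integrable M (Z h)" by (intro square_integrable_imp_integrable[of "Z h"]) simp_all
  have "(LINT \<omega>|M. Z h \<omega> * Z h \<omega>) = (LINT p:S01|lborel. h p * h p)"
    using wn h unfolding white_noise_def L2_S01_def by blast
  then show "(LINT \<omega>|M. (Z h \<omega>)^2) = (LINT p:S01|lborel. (h p)^2)"
    by (simp only: power2_eq_square)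
qed

lemma white_noise_linear:
  assumes "white_noise M Z" "L2_S01 h" "L2_S01 h'"
  shows "AE \<omega> in M. Z (\<lambda>p. a * h p + b * h' p) \<omega> = a * Z h \<omega> + b * Z h' \<omega>"
  using assms unfolding white_noise_def L2_S01_def by blast

lemma white_noise_sum:
  assumes wn: "white_noise M Z"
  shows "finite F \<Longrightarrow> (\<And>n. n \<in> F \<Longrightarrow> L2_S01 (\<phi> n)) \<Longrightarrow>
    AE \<omega> in M. Z (\<lambda>p. \<Sum>n\<in>F. \<phi> n p) \<omega> = (\<Sum>n\<in>F. Z (\<phi> n) \<omega>)"
proof (induction F rule: finite_induct)
  case empty
  show ?case using white_noise_linear[OF wn L2_S01_zero L2_S01_zero, of 0 0] by simp
next
  case (insert x F)
  have "AE \<omega> in M. Z (\<lambda>p. 1 * \<phi> x p + 1 * (\<Sum>n\<in>F. \<phi> n p)) \<omega> = 1 * Z (\<phi> x) \<omega> + 1 * Z (\<lambda>p. \<Sum>n\<in>F. \<phi> n p) \<omega>"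
    using insert by (intro white_noise_linear[OF wn] L2_S01_sum) auto
  moreover have "AE \<omega> in M. Z (\<lambda>p. \<Sum>n\<in>F. \<phi> n p) \<omega> = (\<Sum>n\<in>F. Z (\<phi> n) \<omega>)"
    using insert by simp
  ultimately show ?case by eventually_elim (simp add: insert.hyps)
qed

lemma L2_S01_Re_Im_sum:
  assumes "finite W" and h: "\<And>m. m \<in> W \<Longrightarrow> L2_S01 (\<lambda>p. Re (h m p)) \<and> L2_S01 (\<lambda>p. Im (h m p))"
  shows "L2_S01 (\<lambda>p. Re (\<Sum>m\<in>W. a m * h m p)) \<and> L2_S01 (\<lambda>p. Im (\<Sum>m\<in>W. a m * h m p))"
proof -
  have "L2_S01 (\<lambda>p. Re (a m) * Re (h m p) + (- Im (a m)) * Im (h m p))"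
    "L2_S01 (\<lambda>p. Re (a m) * Im (h m p) + Im (a m) * Re (h m p))" if "m \<in> W" for m
    using h[OF that] L2_S01_lin by blast+
  then show ?thesis
    unfolding Re_sum Im_sum using assms(1) by (auto intro!: L2_S01_sum)
qed

lemma borel_measurable_wn_int:
  assumes "white_noise M Z" "L2_S01 (\<lambda>p. Re (h p))" "L2_S01 (\<lambda>p. Im (h p))"
  shows "wn_int Z h \<in> borel_measurable M"
  using white_noise_moments(1)[OF assms(1,2)] white_noise_moments(1)[OF assms(1,3)]
  unfolding wn_int_def[abs_def] by measurable

lemma wn_int_sum:
  assumes wn: "white_noise M Z" and W: "finite W"
    and h: "\<And>m. m \<in> W \<Longrightarrow> L2_S01 (\<lambda>p. Re (h m p)) \<and> L2_S01 (\<lambda>p. Im (h m p))"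
  shows "AE \<omega> in M. (\<Sum>m\<in>W. a m * wn_int Z (h m) \<omega>) = wn_int Z (\<lambda>p. \<Sum>m\<in>W. a m * h m p) \<omega>"
proof -
  define R I where "R m = (\<lambda>p. Re (h m p))" and "I m = (\<lambda>p. Im (h m p))" for m
  define \<phi>r \<phi>i where "\<phi>r m = (\<lambda>p. Re (a m) * R m p + (- Im (a m)) * I m p)"
    and "\<phi>i m = (\<lambda>p. Im (a m) * R m p + Re (a m) * I m p)" for m
  have L2: "L2_S01 (\<phi>r m)" "L2_S01 (\<phi>i m)" if "m \<in> W" for m
    unfolding \<phi>r_def \<phi>i_def R_def I_def using h[OF that] L2_S01_lin by blast+
  have re: "(\<lambda>p. Re (\<Sum>m\<in>W. a m * h m p)) = (\<lambda>p. \<Sum>m\<in>W. \<phi>r m p)"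
    and im: "(\<lambda>p. Im (\<Sum>m\<in>W. a m * h m p)) = (\<lambda>p. \<Sum>m\<in>W. \<phi>i m p)"
    by (simp_all add: Re_sum Im_sum \<phi>r_def \<phi>i_def R_def I_def algebra_simps)
  have "AE \<omega> in M. \<forall>m\<in>W. Z (\<phi>r m) \<omega> = Re (a m) * Z (R m) \<omega> + (- Im (a m)) * Z (I m) \<omega>"
    using h unfolding \<phi>r_def R_def I_def by (intro AE_finite_allI W white_noise_linear[OF wn]) auto
  moreover have "AE \<omega> in M. \<forall>m\<in>W. Z (\<phi>i m) \<omega> = Im (a m) * Z (R m) \<omega> + Re (a m) * Z (I m) \<omega>"
    using h unfolding \<phi>i_def R_def I_def by (intro AE_finite_allI W white_noise_linear[OF wn]) auto
  moreover have "AE \<omega> in M. Z (\<lambda>p. \<Sum>m\<in>W. \<phi>r m p) \<omega> = (\<Sum>m\<in>W. Z (\<phi>r m) \<omega>)"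
    using L2 by (intro white_noise_sum[OF wn W])
  moreover have "AE \<omega> in M. Z (\<lambda>p. \<Sum>m\<in>W. \<phi>i m p) \<omega> = (\<Sum>m\<in>W. Z (\<phi>i m) \<omega>)"
    using L2 by (intro white_noise_sum[OF wn W])
  ultimately show ?thesis
  proof eventually_elim
    case (elim \<omega>)
    have "(\<Sum>m\<in>W. Z (\<phi>r m) \<omega>) = (\<Sum>m\<in>W. Re (a m) * Z (R m) \<omega> + (- Im (a m)) * Z (I m) \<omega>)"
      "(\<Sum>m\<in>W. Z (\<phi>i m) \<omega>) = (\<Sum>m\<in>W. Im (a m) * Z (R m) \<omega> + Re (a m) * Z (I m) \<omega>)"
      using elim(1,2) by (auto intro: sum.cong)
    then show ?case
      unfolding wn_int_def re im elim(3,4) R_def I_def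
      by (simp add: complex_eq_iff Re_sum Im_sum algebra_simps)
  qed
qed

lemma cvariance_cong_AE:
  assumes "X \<in> borel_measurable M" "Y \<in> borel_measurable M" "AE \<omega> in M. X \<omega> = Y \<omega>"
  shows "cvariance M X = cvariance M Y"
proof -
  have "(LINT \<omega>|M. X \<omega>) = (LINT \<omega>|M. Y \<omega>)" using assms by (rule integral_cong_AE)
  then show ?thesis
    unfolding cvariance_def using assms by (intro integral_cong_AE) (auto elim: AE_mp)
qed

lemma cvariance_affine_wn_int:
  assumes wn: "white_noise M Z" and re: "L2_S01 (\<lambda>p. Re (h p))" and im: "L2_S01 (\<lambda>p. Im (h p))"
  shows "cvariance M (\<lambda>\<omega>. c + complex_of_real \<epsilon> * wn_int Z h \<omega>)
       = \<epsilon>^2 * (LINT p:S01|lborel. (cmod (h p))^2)"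
proof -
  have "prob_space M" using wn unfolding white_noise_def by auto
  then interpret prob_space M .
  note R = white_noise_moments[OF wn re] and I = white_noise_moments[OF wn im]
  have "(LINT \<omega>|M. c + complex_of_real \<epsilon> * wn_int Z h \<omega>) = c"
    using R I by (simp add: wn_int_def distrib_left prob_space)
  then have "cvariance M (\<lambda>\<omega>. c + complex_of_real \<epsilon> * wn_int Z h \<omega>)
      = (LINT \<omega>|M. \<epsilon>^2 * ((Z (\<lambda>p. Re (h p)) \<omega>)^2 + (Z (\<lambda>p. Im (h p)) \<omega>)^2))"
    unfolding cvariance_def by (simp add: wn_int_def cmod_power2 power_mult_distrib algebra_simps)
  also have "\<dots> = \<epsilon>^2 * ((LINT p:S01|lborel. (Re (h p))^2) + (LINT p:S01|lborel. (Im (h p))^2))"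
    using R I by simp
  also have "\<dots> = \<epsilon>^2 * (LINT p:S01|lborel. (cmod (h p))^2)"
    using re im unfolding L2_S01_def by (simp add: set_integral_add cmod_power2)
  finally show ?thesis .
qed

definition deconv_kernel :: "(real \<Rightarrow> real) \<Rightarrow> (real \<Rightarrow> complex) \<Rightarrow> int \<Rightarrow> real \<times> real \<Rightarrow> complex" where
  "deconv_kernel e G m p = cnj (expo m (snd p)) * complex_of_real (e (fst p)) / G (fst p)"

lemma borel_measurable_deconv_kernel:
  assumes [measurable]: "e \<in> borel_measurable borel" "G \<in> borel_measurable borel"
  shows "deconv_kernel e G m \<in> borel_measurable borel"
proof -
  have "(\<lambda>p. cnj (expo m (snd p)) * complex_of_real (e (fst p)) / G (fst p))
      \<in> borel_measurable (borel \<Otimes>\<^sub>M borel)"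
    by measurable
  then show ?thesis unfolding deconv_kernel_def[abs_def] by (simp only: borel_prod)
qed

lemma norm_deconv_kernel_le:
  assumes "p \<in> S01" and K: "0 < K" "\<And>u. u \<in> {0..1} \<Longrightarrow> K \<le> (cmod (G u))^2"
  shows "cmod (deconv_kernel e G m p) \<le> \<bar>e (fst p)\<bar> / sqrt K"
proof -
  have G: "sqrt K \<le> cmod (G (fst p))"
    using K(2)[of "fst p"] \<open>p \<in> S01\<close> by (auto simp: S01_def mem_Times_iff intro: real_le_lsqrt)
  have "0 < sqrt K" using K(1) by simp
  then have "\<bar>e (fst p)\<bar> / cmod (G (fst p)) \<le> \<bar>e (fst p)\<bar> / sqrt K"
    using G by (intro divide_left_mono mult_pos_pos) auto
  then show ?thesis unfolding deconv_kernel_def by (simp add: norm_mult norm_divide)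
qed

lemma L2_S01_deconv_kernel:
  assumes e: "e \<in> borel_measurable borel" "set_integrable lborel {0..1} (\<lambda>u. (e u)^2)"
    and G: "G \<in> borel_measurable borel" and K: "0 < K" "\<And>u. u \<in> {0..1} \<Longrightarrow> K \<le> (cmod (G u))^2"
  shows "L2_S01 (\<lambda>p. Re (deconv_kernel e G m p)) \<and> L2_S01 (\<lambda>p. Im (deconv_kernel e G m p))"
proof -
  note [measurable] = borel_measurable_deconv_kernel[OF e(1) G]
  have sq: "(cmod (deconv_kernel e G m p))^2 \<le> (e (fst p))^2 / K" if p: "p \<in> S01" for p
  proof -
    have "(cmod (deconv_kernel e G m p))^2 \<le> (\<bar>e (fst p)\<bar> / sqrt K)^2"
      by (intro power_mono norm_deconv_kernel_le[OF p K] norm_ge_zero)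
    then show ?thesis using K(1) by (simp add: power_divide)
  qed
  have d: "(\<lambda>u. (e u)^2 / K) \<in> borel_measurable borel" "set_integrable lborel {0..1} (\<lambda>u. (e u)^2 / K)"
    using e by (auto intro: set_integral_divide_zero)
  have "set_integrable lborel S01 (\<lambda>p. (Re (deconv_kernel e G m p))^2)"
  proof (rule set_integrable_S01_dominated[OF d])
    show "norm ((Re (deconv_kernel e G m p))^2) \<le> (e (fst p))^2 / K" if "p \<in> S01" for p
      using sq[OF that]
      by (simp add: cmod_power2) (smt (verit) zero_le_power2[of "Im (deconv_kernel e G m p)"])
  qed measurable
  moreover have "set_integrable lborel S01 (\<lambda>p. (Im (deconv_kernel e G m p))^2)"
  proof (rule set_integrable_S01_dominated[OF d])
    show "norm ((Im (deconv_kernel e G m p))^2) \<le> (e (fst p))^2 / K" if "p \<in> S01" for p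
      using sq[OF that]
      by (simp add: cmod_power2) (smt (verit) zero_le_power2[of "Re (deconv_kernel e G m p)"])
  qed measurable
  ultimately show ?thesis unfolding L2_S01_def by simp
qed

lemma parseval_sum_deconv_kernel:
  assumes "finite W"
  shows "(LINT t:{0..1}|lborel. (cmod (\<Sum>m\<in>W. a m * deconv_kernel e (G m) m (u, t)))^2)
       = (e u)^2 * (\<Sum>m\<in>W. (cmod (a m))^2 / (cmod (G m u))^2)"
proof -
  define d where "d m = cnj (a m * complex_of_real (e u) / G m u)" for m
  have "cmod (\<Sum>m\<in>W. a m * deconv_kernel e (G m) m (u, t)) = cmod (\<Sum>m\<in>W. d m * expo m t)" for t
    unfolding d_def deconv_kernel_def by (subst complex_mod_cnj[symmetric]) (simp add: cnj_sum mult_ac)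
  then have "(LINT t:{0..1}|lborel. (cmod (\<Sum>m\<in>W. a m * deconv_kernel e (G m) m (u, t)))^2)
      = (\<Sum>m\<in>W. (cmod (d m))^2)"
    using parseval_trig_poly[OF assms] by simp
  moreover have "(cmod (d m))^2 = (e u)^2 * ((cmod (a m))^2 / (cmod (G m u))^2)" for m
    unfolding d_def complex_mod_cnj norm_divide norm_mult by (simp add: power_divide power_mult_distrib)
  ultimately show ?thesis by (simp only: sum_distrib_left)
qed

lemma set_integrable_norm_sum_deconv_kernel_sq:
  fixes G :: "int \<Rightarrow> real \<Rightarrow> complex"
  assumes e: "e \<in> borel_measurable borel" "set_integrable lborel {0..1} (\<lambda>u. (e u)^2)"
    and G: "\<And>m. G m \<in> borel_measurable borel"
    and K: "0 < K" "\<And>m u. m \<in> W \<Longrightarrow> u \<in> {0..1} \<Longrightarrow> K \<le> (cmod (G m u))^2"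
  shows "set_integrable lborel S01 (\<lambda>p. (cmod (\<Sum>m\<in>W. a m * deconv_kernel e (G m) m p))^2)"
proof (rule set_integrable_S01_dominated)
  define S where "S = (\<Sum>m\<in>W. cmod (a m)) / sqrt K"
  show "set_integrable lborel {0..1} (\<lambda>u. S^2 * (e u)^2)"
    using e(2) by (rule set_integrable_mult_right)
  show "(\<lambda>p. (cmod (\<Sum>m\<in>W. a m * deconv_kernel e (G m) m p))^2) \<in> borel_measurable borel"
    using borel_measurable_deconv_kernel[OF e(1) G] by measurable
  fix p :: "real \<times> real" assume p: "p \<in> S01"
  have "cmod (deconv_kernel e (G m) m p) \<le> \<bar>e (fst p)\<bar> / sqrt K" if "m \<in> W" for m
    by (rule norm_deconv_kernel_le[OF p K(1) K(2)[OF that]])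
  then have "cmod (\<Sum>m\<in>W. a m * deconv_kernel e (G m) m p) \<le> (\<Sum>m\<in>W. cmod (a m) * (\<bar>e (fst p)\<bar> / sqrt K))"
    by (intro order_trans[OF norm_sum] sum_mono) (simp only: norm_mult, rule mult_left_mono, auto)
  also have "\<dots> = S * \<bar>e (fst p)\<bar>"
    unfolding S_def by (simp add: sum_distrib_right sum_divide_distrib)
  finally have "(cmod (\<Sum>m\<in>W. a m * deconv_kernel e (G m) m p))^2 \<le> (S * \<bar>e (fst p)\<bar>)^2"
    by (rule power_mono) simp
  then show "norm ((cmod (\<Sum>m\<in>W. a m * deconv_kernel e (G m) m p))^2) \<le> S^2 * (e (fst p))^2"
    by (simp add: power_mult_distrib)
qed (use e(1) in measurable)

lemma set_integral_norm_sum_deconv_kernel_sq: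
  fixes G :: "int \<Rightarrow> real \<Rightarrow> complex"
  assumes e: "e \<in> borel_measurable borel" "set_integrable lborel {0..1} (\<lambda>u. (e u)^2)"
    and W: "finite W" and G: "\<And>m. G m \<in> borel_measurable borel"
    and K: "0 < K" "\<And>m u. m \<in> W \<Longrightarrow> u \<in> {0..1} \<Longrightarrow> K \<le> (cmod (G m u))^2"
  shows "(LINT p:S01|lborel. (cmod (\<Sum>m\<in>W. a m * deconv_kernel e (G m) m p))^2)
       = (LINT u:{0..1}|lborel. (e u)^2 * (\<Sum>m\<in>W. (cmod (a m))^2 / (cmod (G m u))^2))"
  by (simp only: set_integral_S01_iterated[OF set_integrable_norm_sum_deconv_kernel_sq[OF e G K]]
        parseval_sum_deconv_kernel[OF W])

lemma cvariance_beta_tilde: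
  assumes noise: "white_noise M Z"
    and g_meas: "(\<lambda>p. g (fst p) (snd p)) \<in> borel_measurable borel"
    and W: "finite (Wset \<psi> j)" and eta: "orthonormal01 \<eta>" and k': "k' < 2^j'"
    and K: "0 < K" "\<And>m u. m \<in> Wset \<psi> j \<Longrightarrow> u \<in> {0..1} \<Longrightarrow> K \<le> (cmod (gcoef g m u))^2"
  shows "cvariance M (beta_tilde \<psi> \<eta> g f \<epsilon> Z j k j' k')
       = \<epsilon>^2 * (LINT u:{0..1}|lborel. (\<eta> j' k' u)^2 *
           (\<Sum>m\<in>Wset \<psi> j. (cmod (psi_coef \<psi> j k m))^2 / (cmod (gcoef g m u))^2))"
proof -
  define a where "a m = cnj (psi_coef \<psi> j k m)" for m
  define h where "h m = deconv_kernel (\<eta> j' k') (gcoef g m) m" for m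
  define c where "c = (\<Sum>m\<in>Wset \<psi> j. a m *
    (LINT p:S01|lborel. complex_of_real (conv_signal g f (fst p) (snd p)) * h m p))"
  have e: "\<eta> j' k' \<in> borel_measurable borel" "set_integrable lborel {0..1} (\<lambda>u. (\<eta> j' k' u)^2)"
    using eta k' unfolding orthonormal01_def by auto
  note G = borel_measurable_gcoef[OF g_meas]
  have h: "L2_S01 (\<lambda>p. Re (h m p)) \<and> L2_S01 (\<lambda>p. Im (h m p))" if "m \<in> Wset \<psi> j" for m
    unfolding h_def by (rule L2_S01_deconv_kernel[OF e G K(1) K(2)[OF that]])
  have beta: "beta_tilde \<psi> \<eta> g f \<epsilon> Z j k j' k'
      = (\<lambda>\<omega>. c + complex_of_real \<epsilon> * (\<Sum>m\<in>Wset \<psi> j. a m * wn_int Z (h m) \<omega>))"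
    unfolding beta_tilde_def obs_int_def c_def a_def h_def deconv_kernel_def
    by (simp add: fun_eq_iff distrib_left sum.distrib sum_distrib_left mult_ac)
  have H: "L2_S01 (\<lambda>p. Re (\<Sum>m\<in>Wset \<psi> j. a m * h m p)) \<and> L2_S01 (\<lambda>p. Im (\<Sum>m\<in>Wset \<psi> j. a m * h m p))"
    by (rule L2_S01_Re_Im_sum[OF W, where h = h, OF h])
  have "(\<lambda>\<omega>. \<Sum>m\<in>Wset \<psi> j. a m * wn_int Z (h m) \<omega>) \<in> borel_measurable M"
    using h by (intro borel_measurable_sum borel_measurable_times measurable_const
                      borel_measurable_wn_int[OF noise]) auto
  moreover have "wn_int Z (\<lambda>p. \<Sum>m\<in>Wset \<psi> j. a m * h m p) \<in> borel_measurable M"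
    using H by (intro borel_measurable_wn_int[OF noise]) auto
  ultimately have "cvariance M (beta_tilde \<psi> \<eta> g f \<epsilon> Z j k j' k')
      = cvariance M (\<lambda>\<omega>. c + complex_of_real \<epsilon> * wn_int Z (\<lambda>p. \<Sum>m\<in>Wset \<psi> j. a m * h m p) \<omega>)"
    unfolding beta using wn_int_sum[OF noise W, where h = h and a = a, OF h]
    by (intro cvariance_cong_AE) (auto elim: AE_mp)
  also have "\<dots> = \<epsilon>^2 * (LINT p:S01|lborel. (cmod (\<Sum>m\<in>Wset \<psi> j. a m * h m p))^2)"
    using H by (intro cvariance_affine_wn_int[OF noise]) auto
  also have "\<dots> = \<epsilon>^2 * (LINT u:{0..1}|lborel. (\<eta> j' k' u)^2 *
           (\<Sum>m\<in>Wset \<psi> j. (cmod (psi_coef \<psi> j k m))^2 / (cmod (gcoef g m u))^2))"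
    unfolding h_def a_def
    by (simp only: set_integral_norm_sum_deconv_kernel_sq[OF e W G K] complex_mod_cnj)
  finally show ?thesis .
qed

lemma weighted_mean_bounds:
  fixes w x :: "'a \<Rightarrow> real"
  assumes "sum w W = 1" and "\<And>m. m \<in> W \<Longrightarrow> 0 \<le> w m" and "\<And>m. m \<in> W \<Longrightarrow> L \<le> x m \<and> x m \<le> U"
  shows "L \<le> (\<Sum>m\<in>W. w m * x m) \<and> (\<Sum>m\<in>W. w m * x m) \<le> U"
proof
  have "L = (\<Sum>m\<in>W. w m * L)" using assms(1) by (simp flip: sum_distrib_right)
  also have "\<dots> \<le> (\<Sum>m\<in>W. w m * x m)" using assms(2,3) by (intro sum_mono mult_left_mono) auto
  finally show "L \<le> (\<Sum>m\<in>W. w m * x m)" .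
  have "(\<Sum>m\<in>W. w m * x m) \<le> (\<Sum>m\<in>W. w m * U)" using assms(2,3) by (intro sum_mono mult_left_mono) auto
  also have "\<dots> = U" using assms(1) by (simp flip: sum_distrib_right)
  finally show "(\<Sum>m\<in>W. w m * x m) \<le> U" .
qed

lemma set_integral_weighted_bounds:
  fixes e V :: "real \<Rightarrow> real"
  assumes e: "e \<in> borel_measurable borel" "set_integrable lborel {0..1} (\<lambda>u. (e u)^2)"
    "(LINT u:{0..1}|lborel. (e u)^2) = 1"
    and V: "V \<in> borel_measurable borel" "\<And>u. u \<in> {0..1} \<Longrightarrow> L \<le> V u \<and> V u \<le> U"
  shows "L \<le> (LINT u:{0..1}|lborel. (e u)^2 * V u) \<and> (LINT u:{0..1}|lborel. (e u)^2 * V u) \<le> U"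
proof -
  have int_const: "set_integrable lborel {0..1} (\<lambda>u. c * (e u)^2)" for c
    using e(2) by (rule set_integrable_mult_right)
  have iV: "set_integrable lborel {0..1} (\<lambda>u. (e u)^2 * V u)"
    unfolding set_integrable_def
  proof (rule Bochner_Integration.integrable_bound)
    show "integrable lborel (\<lambda>u. indicator {0..1} u *\<^sub>R ((\<bar>L\<bar> + \<bar>U\<bar>) * (e u)^2))"
      using int_const unfolding set_integrable_def .
    show "(\<lambda>u. indicator {0..1} u *\<^sub>R ((e u)^2 * V u)) \<in> borel_measurable lborel"
      using e(1) V(1) by measurable
    show "AE u in lborel. norm (indicator {0..1} u *\<^sub>R ((e u)^2 * V u))
        \<le> norm (indicator {0..1} u *\<^sub>R ((\<bar>L\<bar> + \<bar>U\<bar>) * (e u)^2))"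
    proof (intro AE_I2)
      fix u :: real
      have "u \<in> {0..1} \<Longrightarrow> \<bar>V u\<bar> \<le> \<bar>L\<bar> + \<bar>U\<bar>" using V(2)[of u] by linarith
      then show "norm (indicator {0..1} u *\<^sub>R ((e u)^2 * V u))
          \<le> norm (indicator {0..1} u *\<^sub>R ((\<bar>L\<bar> + \<bar>U\<bar>) * (e u)^2))"
        by (auto split: split_indicator simp: abs_mult mult.commute[of "(e u)^2"] intro: mult_right_mono)
    qed
  qed
  have "L * (e u)^2 \<le> (e u)^2 * V u" "(e u)^2 * V u \<le> U * (e u)^2" if "u \<in> {0..1}" for u
    using V(2)[OF that] by (auto simp: mult.commute[of "(e u)^2"] intro: mult_right_mono)
  then have "(LINT u:{0..1}|lborel. L * (e u)^2) \<le> (LINT u:{0..1}|lborel. (e u)^2 * V u)"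
    "(LINT u:{0..1}|lborel. (e u)^2 * V u) \<le> (LINT u:{0..1}|lborel. U * (e u)^2)"
    by (intro set_integral_mono int_const iV; blast)+
  then show ?thesis using e(3) by simp
qed

lemma powr_meyer_band_bounds:
  assumes "m \<in> meyer_band j" and "0 \<le> s"
  shows "3 powr (- s) * 2 powr (real j * s) \<le> \<bar>real_of_int m\<bar> powr s"
    and "\<bar>real_of_int m\<bar> powr s \<le> (4/3) powr s * 2 powr (real j * s)"
proof -
  have pow2: "(2::real)^j = 2 powr real j" by (simp add: powr_realpow)
  have lo: "2 powr real j / 3 \<le> \<bar>real_of_int m\<bar>" and hi: "\<bar>real_of_int m\<bar> \<le> 4/3 * 2 powr real j"
    using assms(1) unfolding meyer_band_def pow2[symmetric] by (auto simp: power_add)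
  have "3 powr (- s) * 2 powr (real j * s) = (2 powr real j / 3) powr s"
    by (simp add: powr_divide powr_powr powr_minus_divide)
  also have "\<dots> \<le> \<bar>real_of_int m\<bar> powr s" using lo assms(2) by (intro powr_mono2) auto
  finally show "3 powr (- s) * 2 powr (real j * s) \<le> \<bar>real_of_int m\<bar> powr s" .
  have "\<bar>real_of_int m\<bar> powr s \<le> (4/3 * 2 powr real j) powr s" using hi assms(2) by (intro powr_mono2) auto
  also have "\<dots> = (4/3) powr s * 2 powr (real j * s)" by (subst powr_mult) (simp_all add: powr_powr)
  finally show "\<bar>real_of_int m\<bar> powr s \<le> (4/3) powr s * 2 powr (real j * s)" .
qed

lemma inverse_bounds_meyer_band:
  fixes y \<nu> C1 C2 :: real
  assumes "0 < \<nu>" and C: "0 < C1" "C1 \<le> C2" and m: "m \<in> meyer_band j"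
    and y: "C1 * \<bar>real_of_int m\<bar> powr (- 2 * \<nu>) \<le> y" "y \<le> C2 * \<bar>real_of_int m\<bar> powr (- 2 * \<nu>)"
  shows "3 powr (- 2 * \<nu>) / C2 * 2 powr (2 * real j * \<nu>) \<le> 1 / y
    \<and> 1 / y \<le> (4/3) powr (2 * \<nu>) / C1 * 2 powr (2 * real j * \<nu>)"
proof -
  define x where "x = \<bar>real_of_int m\<bar> powr (2 * \<nu>)"
  have x: "0 < x" using m zero_notin_meyer_band[of j] by (auto simp: x_def)
  have y': "C1 / x \<le> y" "y \<le> C2 / x"
    using y by (simp_all add: x_def powr_minus divide_inverse)
  moreover have "0 < y" using divide_pos_pos[OF C(1) x] y'(1) by linarith
  ultimately have "x / C2 \<le> 1 / y" "1 / y \<le> x / C1"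
    using x C by (simp_all add: field_simps)
  moreover have "3 powr (- 2 * \<nu>) * 2 powr (2 * real j * \<nu>) \<le> x"
    "x \<le> (4/3) powr (2 * \<nu>) * 2 powr (2 * real j * \<nu>)"
    using powr_meyer_band_bounds[OF m, of "2 * \<nu>"] \<open>0 < \<nu>\<close> by (simp_all add: x_def mult_ac)
  ultimately show ?thesis
    using C by (smt (verit) divide_right_mono mult.commute times_divide_eq_left)
qed

lemma cvariance_beta_tilde_bounds:
  assumes noise: "white_noise M Z"
    and g_meas: "(\<lambda>p. g (fst p) (snd p)) \<in> borel_measurable borel"
    and psi: "meyer_type \<psi>" and eta: "orthonormal01 \<eta>" and k: "k < 2^j" and k': "k' < 2^j'"
    and L: "0 < L"
    and bounds: "\<And>m u. m \<in> Wset \<psi> j \<Longrightarrow> u \<in> {0..1} \<Longrightarrow>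
       L \<le> 1 / (cmod (gcoef g m u))^2 \<and> 1 / (cmod (gcoef g m u))^2 \<le> U"
    \<comment> \<open>with \<open>L > 0\<close> this excludes \<open>g\<^sub>m(u) = 0\<close>, where HOL's \<open>1/0 = 0\<close>\<close>
  shows "\<epsilon>^2 * L \<le> cvariance M (beta_tilde \<psi> \<eta> g f \<epsilon> Z j k j' k')
    \<and> cvariance M (beta_tilde \<psi> \<eta> g f \<epsilon> Z j k j' k') \<le> \<epsilon>^2 * U"
proof -
  define V where "V u = (\<Sum>m\<in>Wset \<psi> j. (cmod (psi_coef \<psi> j k m))^2 / (cmod (gcoef g m u))^2)" for u
  have weights: "(\<Sum>m\<in>Wset \<psi> j. (cmod (psi_coef \<psi> j k m))^2) = 1"
    by (rule sum_norm_psi_coef_sq[OF psi k])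
  then obtain m0 where "m0 \<in> Wset \<psi> j" by fastforce
  then have U: "0 < U" using bounds[of m0 0] L by simp
  have K: "1 / U \<le> (cmod (gcoef g m u))^2" if "m \<in> Wset \<psi> j" "u \<in> {0..1}" for m u
    using bounds[OF that] L U by (smt (verit) divide_le_eq le_divide_eq mult.commute zero_less_divide_1_iff)
  have V: "L \<le> V u \<and> V u \<le> U" if "u \<in> {0..1}" for u
    using weighted_mean_bounds[OF weights, where x = "\<lambda>m. 1 / (cmod (gcoef g m u))^2"
        and L = L and U = U] bounds[OF _ that]
    by (simp add: V_def)
  have "V \<in> borel_measurable borel"
    unfolding V_def[abs_def] using borel_measurable_gcoef[OF g_meas] by measurable
  moreover have "\<eta> j' k' \<in> borel_measurable borel" "set_integrable lborel {0..1} (\<lambda>u. (\<eta> j' k' u)^2)"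
    "(LINT u:{0..1}|lborel. (\<eta> j' k' u)^2) = 1"
    using eta k' unfolding orthonormal01_def by (auto simp: power2_eq_square)
  ultimately have "L \<le> (LINT u:{0..1}|lborel. (\<eta> j' k' u)^2 * V u)
      \<and> (LINT u:{0..1}|lborel. (\<eta> j' k' u)^2 * V u) \<le> U"
    using V by (intro set_integral_weighted_bounds) auto
  moreover have "cvariance M (beta_tilde \<psi> \<eta> g f \<epsilon> Z j k j' k')
      = \<epsilon>^2 * (LINT u:{0..1}|lborel. (\<eta> j' k' u)^2 * V u)"
    unfolding V_def using U
    by (intro cvariance_beta_tilde[OF noise g_meas finite_Wset[OF psi] eta k' _ K]) auto
  ultimately show ?thesis by (simp add: mult_left_mono)
qed

theorem lemma1:
  fixes M :: "'w measure"
    and Z :: "((real \<times> real) \<Rightarrow> real) \<Rightarrow> 'w \<Rightarrow> real"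
    and f g :: "real \<Rightarrow> real \<Rightarrow> real"
    and \<psi> \<eta> :: "nat \<Rightarrow> nat \<Rightarrow> real \<Rightarrow> real"
    and \<nu> C1 C2 :: real
  assumes noise: "white_noise M Z"
    and f_per: "periodic2 f" and g_per: "periodic2 g"
    and f_meas: "(\<lambda>p. f (fst p) (snd p)) \<in> borel_measurable borel"
    and g_meas: "(\<lambda>p. g (fst p) (snd p)) \<in> borel_measurable borel"
    and psi: "meyer_type \<psi>"
    and eta: "daubechies_type \<eta>"
    and nu: "\<nu> > 0"
    and C: "0 < C1" "C1 \<le> C2"
    and g_bounds: "\<And>m u. m \<noteq> 0 \<Longrightarrow> u \<in> {0..1} \<Longrightarrow>
         C1 * \<bar>real_of_int m\<bar> powr (- 2 * \<nu>) \<le> (cmod (gcoef g m u))^2 \<and>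
         (cmod (gcoef g m u))^2 \<le> C2 * \<bar>real_of_int m\<bar> powr (- 2 * \<nu>)"
  shows "\<exists>c1 c2. 0 < c1 \<and> 0 < c2 \<and>
           (\<forall>\<epsilon>>0. \<forall>j k j' k'. k < 2^j \<longrightarrow> k' < 2^j' \<longrightarrow>
              c1 * \<epsilon>^2 * 2 powr (2 * real j * \<nu>)
                \<le> cvariance M (beta_tilde \<psi> \<eta> g f \<epsilon> Z j k j' k') \<and>
              cvariance M (beta_tilde \<psi> \<eta> g f \<epsilon> Z j k j' k')
                \<le> c2 * \<epsilon>^2 * 2 powr (2 * real j * \<nu>))"
proof -
  define c1 where "c1 = 3 powr (- 2 * \<nu>) / C2"
  define c2 where "c2 = (4/3) powr (2 * \<nu>) / C1"
  have inverse_bounds: "c1 * 2 powr (2 * real j * \<nu>) \<le> 1 / (cmod (gcoef g m u))^2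
      \<and> 1 / (cmod (gcoef g m u))^2 \<le> c2 * 2 powr (2 * real j * \<nu>)"
    if "m \<in> Wset \<psi> j" "u \<in> {0..1}" for j m u
  proof -
    have m: "m \<in> meyer_band j" using Wset_subset_meyer_band[OF psi] that(1) by blast
    then have "m \<noteq> 0" using zero_notin_meyer_band by blast
    then show ?thesis
      unfolding c1_def c2_def using g_bounds[OF _ that(2)]
      by (intro inverse_bounds_meyer_band[OF nu C m]) auto
  qed
  have c: "0 < c1" "0 < c2" using C by (auto simp: c1_def c2_def)
  have eta': "orthonormal01 \<eta>" using eta by (simp add: daubechies_type_def)
  show ?thesis
  proof (intro exI conjI allI impI)
    fix \<epsilon> :: real and j k j' k' :: nat assume "k < 2^j" "k' < 2^j'"
    then have "\<epsilon>^2 * (c1 * 2 powr (2 * real j * \<nu>)) \<le> cvariance M (beta_tilde \<psi> \<eta> g f \<epsilon> Z j k j' k')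
      \<and> cvariance M (beta_tilde \<psi> \<eta> g f \<epsilon> Z j k j' k') \<le> \<epsilon>^2 * (c2 * 2 powr (2 * real j * \<nu>))"
      using inverse_bounds c by (intro cvariance_beta_tilde_bounds[OF noise g_meas psi eta']) auto
    then show "c1 * \<epsilon>^2 * 2 powr (2 * real j * \<nu>) \<le> cvariance M (beta_tilde \<psi> \<eta> g f \<epsilon> Z j k j' k')"
      "cvariance M (beta_tilde \<psi> \<eta> g f \<epsilon> Z j k j' k') \<le> c2 * \<epsilon>^2 * 2 powr (2 * real j * \<nu>)"
      by (simp_all add: mult_ac)
  qed (fact c)+
qed

end
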